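(* Let $\gamma,A\in\mathcal{M}_k\otimes\mathcal{M}_m$ be states with $\mathrm{Im}(\gamma)=\mathrm{Im}(A)$. Suppose there is an orthogonal projection $V_1\in\mathcal{M}_k$ such that (1) $F_\gamma\circ G_\gamma(V_1\mathcal{M}_kV_1)\subseteq V_1\mathcal{M}_kV_1$, (2) $F_\gamma\circ G_\gamma|_{V_1\mathcal{M}_kV_1}$ is irreducible, and (3) $F_\gamma\circ G_\gamma|_{V_1^\perp\mathcal{M}_k+\mathcal{M}_kV_1^\perp}\equiv0$. Then the same three conditions hold with $F_A\circ G_A$ in place of $F_\gamma\circ G_\gamma$. In particular, $\gamma$ and $A$ both belong to $CR_{k,m}$.
   Context: $\mathcal{M}_k$ denotes the complex $k\times k$ matrices, and $\mathcal{M}_k\otimes\mathcal{M}_m$ is identified with $\mathcal{M}_{km}$ via the Kronecker product. A state is a positive semidefinite Hermitian matrix (not necessarily of trace one). For an orthogonal projection $W$, $W^\perp=\mathrm{Id}-W$; $V\mathcal{M}_kW=\{VXW:X\in\mathcal{M}_k\}$, $W\mathcal{M}_k=\{WX\}$, $\mathcal{M}_kW=\{XW\}$. For $\gamma=\sum_{i=1}^nA_i\otimes B_i\in\mathcal{M}_k\otimes\mathcal{M}_m$ define $G_\gamma:\mathcal{M}_k\to\mathcal{M}_m$, $G_\gamma(X)=\sum_i\mathrm{tr}(A_iX)B_i$, and $F_\gamma:\mathcal{M}_m\to\mathcal{M}_k$, $F_\gamma(Y)=\sum_i\mathrm{tr}(B_iY)A_i$. A linear map is positive if it maps positive semidefinite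 matrices to positive semidefinite matrices, and self-adjoint if self-adjoint with respect to $\langle X,Y\rangle=\mathrm{tr}(XY^* )$. Given an orthogonal projection $V\in\mathcal{M}_k$ and a positive map $T:V\mathcal{M}_kV\to V\mathcal{M}_kV$, $T$ is irreducible if the only orthogonal projections $W$ with $W\mathcal{M}_kW\subseteq V\mathcal{M}_kV$ and $T(W\mathcal{M}_kW)\subseteq W\mathcal{M}_kW$ are $W=0$ and $W=V$. A self-adjoint positive map $T:\mathcal{M}_k\to\mathcal{M}_k$ is completely reducible if there are orthogonal projections $W_1,\dots,W_l$ with $W_iW_j=0$ for $i\ne j$, $T(W_i\mathcal{M}_kW_i)\subseteq W_i\mathcal{M}_kW_i$ and $T|_{W_i\mathcal{M}_kW_i}$ irreducible for every $i$, and $T|_R\equiv0$, where $R$ is the orthogonal complement (trace inner product) of $\bigoplus_iW_i\mathcal{M}_kW_i$ in $\mathcal{M}_k$. $CR_{k,m}$ is the set of states $\gamma\in\mathcal{M}_k\otimes\mathcal{M}_m$ such that $F_\gamma\circ G_\gamma:\mathcal{M}_k\to\mathcal{M}_k$ is completely reducible. *)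

theory Defs
  imports "HOL-Analysis.Analysis"
begin

text \<open>Square complex matrices of size k are complex^'k^'k (entry A$i$j, row i, column j).
  The tensor product M_k (x) M_m is identified with M_km via the Kronecker product, i.e.
  with matrices indexed by pairs: (A (x) B)$(a,j)$(a',j') = A$a$a' * B$j$j'.\<close>

type_synonym 'n cmat = "complex^'n^'n"

definition kron :: "('k::finite) cmat \<Rightarrow> ('m::finite) cmat \<Rightarrow> ('k \<times> 'm) cmat" where
  "kron A B = (\<chi> p q. A $ fst p $ fst q * B $ snd p $ snd q)"

definition mtrace :: "('n::finite) cmat \<Rightarrow> complex" where
  "mtrace X = (\<Sum>i\<in>UNIV. X $ i $ i)"

definition cadj :: "('n::finite) cmat \<Rightarrow> 'n cmat" where
  "cadj X = (\<chi> i j. cnj (X $ j $ i))"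

definition tinner :: "('n::finite) cmat \<Rightarrow> 'n cmat \<Rightarrow> complex" where
  "tinner X Y = mtrace (X ** cadj Y)"

definition hermitian :: "('n::finite) cmat \<Rightarrow> bool" where
  "hermitian X \<longleftrightarrow> cadj X = X"

definition psd :: "('n::finite) cmat \<Rightarrow> bool" where
  "psd X \<longleftrightarrow> hermitian X \<and>
     (\<forall>v::complex^'n. 0 \<le> Re (\<Sum>i\<in>UNIV. cnj (v $ i) * (X *v v) $ i))"

definition is_state :: "('n::finite) cmat \<Rightarrow> bool" where
  "is_state X \<longleftrightarrow> psd X"

definition orth_proj :: "('n::finite) cmat \<Rightarrow> bool" where
  "orth_proj W \<longleftrightarrow> W ** W = W \<and> cadj W = W"

definition perp :: "('n::finite) cmat \<Rightarrow> 'n cmat" where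
  "perp W = mat 1 - W"

definition img :: "('n::finite) cmat \<Rightarrow> (complex^'n) set" where
  "img X = range (\<lambda>v. X *v v)"

definition sandw :: "('n::finite) cmat \<Rightarrow> 'n cmat \<Rightarrow> 'n cmat set" where
  "sandw V W = {V ** X ** W | X. True}"

definition lmul_sp :: "('n::finite) cmat \<Rightarrow> 'n cmat set" where
  "lmul_sp W = {W ** X | X. True}"

definition rmul_sp :: "('n::finite) cmat \<Rightarrow> 'n cmat set" where
  "rmul_sp W = {X ** W | X. True}"

text \<open>For gamma = sum_i A_i (x) B_i (Kronecker identification),
  G_gamma(X) = sum_i tr(A_i X) B_i and F_gamma(Y) = sum_i tr(B_i Y) A_i. These are linear in
  gamma, hence independent of the decomposition; written out entrywise they are:\<close>
definition Gmap :: "('k::finite \<times> 'm::finite) cmat \<Rightarrow> 'k cmat \<Rightarrow> 'm cmat" where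
  "Gmap \<gamma> X = (\<chi> j j'. \<Sum>a\<in>UNIV. \<Sum>a'\<in>UNIV. \<gamma> $ (a, j) $ (a', j') * X $ a' $ a)"

definition Fmap :: "('k::finite \<times> 'm::finite) cmat \<Rightarrow> 'm cmat \<Rightarrow> 'k cmat" where
  "Fmap \<gamma> Y = (\<chi> a a'. \<Sum>j\<in>UNIV. \<Sum>j'\<in>UNIV. \<gamma> $ (a, j) $ (a', j') * Y $ j' $ j)"

definition FG :: "('k::finite \<times> 'm::finite) cmat \<Rightarrow> 'k cmat \<Rightarrow> 'k cmat" where
  "FG \<gamma> = Fmap \<gamma> \<circ> Gmap \<gamma>"

definition positive_map :: "(('n::finite) cmat \<Rightarrow> 'n cmat) \<Rightarrow> bool" where
  "positive_map T \<longleftrightarrow> (\<forall>X. psd X \<longrightarrow> psd (T X))"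

definition self_adjoint_map :: "(('n::finite) cmat \<Rightarrow> 'n cmat) \<Rightarrow> bool" where
  "self_adjoint_map T \<longleftrightarrow> (\<forall>X Y. tinner (T X) Y = tinner X (T Y))"

text \<open>Irreducibility of T restricted to V M_k V (T is assumed to leave V M_k V invariant,
  which is stated separately wherever it is used).\<close>
definition irreducible_on :: "(('n::finite) cmat \<Rightarrow> 'n cmat) \<Rightarrow> 'n cmat \<Rightarrow> bool" where
  "irreducible_on T V \<longleftrightarrow>
     (\<forall>W. orth_proj W \<and> sandw W W \<subseteq> sandw V V \<and> T ` sandw W W \<subseteq> sandw W W
        \<longrightarrow> W = 0 \<or> W = V)"

definition completely_reducible :: "(('n::finite) cmat \<Rightarrow> 'n cmat) \<Rightarrow> bool" where
  "completely_reducible T \<longleftrightarrow> self_adjoint_map T \<and> positive_map T \<and>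
     (\<exists>Ws :: 'n cmat list.
        (\<forall>i<length Ws. orth_proj (Ws ! i)) \<and>
        (\<forall>i<length Ws. \<forall>j<length Ws. i \<noteq> j \<longrightarrow> Ws ! i ** Ws ! j = 0) \<and>
        (\<forall>i<length Ws. T ` sandw (Ws ! i) (Ws ! i) \<subseteq> sandw (Ws ! i) (Ws ! i)
                        \<and> irreducible_on T (Ws ! i)) \<and>
        (\<forall>X. (\<forall>i<length Ws. \<forall>Y\<in>sandw (Ws ! i) (Ws ! i). tinner X Y = 0) \<longrightarrow> T X = 0))"

definition CR :: "('k::finite \<times> 'm::finite) cmat set" where
  "CR = {\<gamma>. is_state \<gamma> \<and> completely_reducible (FG \<gamma>)}"

end

theory Submission
  imports Defs
begin

text \<open>Each of the three conditions can be rewritten as a condition in which \<open>\<gamma>\<close> enters only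
  through products \<open>\<gamma> K \<gamma>\<close> or through its kernel, and such conditions do not change when \<open>\<gamma>\<close> is
  replaced by a Hermitian matrix with the same range.
  Invariance of \<open>W\<M>\<^sub>kW\<close> under \<open>F\<^sub>\<gamma>G\<^sub>\<gamma>\<close> amounts to \<open>\<langle>w, F\<^sub>\<gamma>G\<^sub>\<gamma>(xx\<^sup>*) w\<rangle> = 0\<close> for
  \<open>x \<in> Im W\<close>, \<open>w \<in> Im W\<^sup>\<perp>\<close>. Writing \<open>\<gamma> = \<Sum>\<^sub>l b\<^sub>l b\<^sub>l\<^sup>*\<close>, this number is a sum of squared moduli,
  so it vanishes iff \<open>\<gamma> (xw\<^sup>* \<otimes> 1) \<gamma> = 0\<close>. Irreducibility only refers to invariant blocks, so it
  transfers as well. Since \<open>\<langle>G\<^sub>\<gamma>X, G\<^sub>\<gamma>X\<rangle> = \<langle>X, F\<^sub>\<gamma>G\<^sub>\<gamma>X\<rangle>\<close>, the map \<open>F\<^sub>\<gamma>G\<^sub>\<gamma>\<close> vanishes on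
  \<open>V\<^sup>\<perp>\<M>\<^sub>k + \<M>\<^sub>kV\<^sup>\<perp>\<close> iff \<open>G\<^sub>\<gamma>\<close> does, i.e. iff \<open>\<gamma>\<close> vanishes on \<open>Im V\<^sup>\<perp> \<otimes> \<complex>\<^sup>m\<close>.
  Finally, \<open>F\<^sub>\<gamma>G\<^sub>\<gamma>\<close> is always self-adjoint and positive, and the single block \<open>V\<^sub>1\<close> then
  witnesses complete reducibility.\<close>

section \<open>Hermitian and positive semidefinite matrices\<close>

definition cinner :: "complex^'n::finite \<Rightarrow> complex^'n \<Rightarrow> complex" where
  "cinner x y = (\<Sum>i\<in>UNIV. cnj (x$i) * y$i)"

lemma cinner_diff_left: "cinner (x - y) z = cinner x z - cinner y z"
  by (simp add: cinner_def sum_subtractf algebra_simps)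

lemma cinner_diff_right: "cinner x (y - z) = cinner x y - cinner x z"
  by (simp add: cinner_def sum_subtractf algebra_simps)

lemma cinner_smult_left: "cinner (c *s x) y = cnj c * cinner x y"
  by (simp add: cinner_def sum_distrib_left algebra_simps)

lemma cinner_smult_right: "cinner x (c *s y) = c * cinner x y"
  by (simp add: cinner_def sum_distrib_left algebra_simps)

lemma cinner_zero_right [simp]: "cinner x 0 = 0"
  by (simp add: cinner_def)

lemma cnj_cinner: "cnj (cinner x y) = cinner y x"
  by (simp add: cinner_def mult.commute)

lemma cinner_axis_left: "cinner (axis s 1) y = y$s"
proof -
  have "\<And>i. cnj (axis s 1 $ i) * y$i = (if i = s then y$s else 0)"
    by (simp add: axis_def)
  then show ?thesis
    by (simp add: cinner_def)
qed

lemma cnj_mult_self: "cnj a * a = complex_of_real ((cmod a)^2)"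
  by (metis complex_norm_square mult.commute)

lemma sum_cnj_mult_self_eq_0:
  fixes c :: "'a \<Rightarrow> complex"
  assumes "finite S" "(\<Sum>l\<in>S. c l * cnj (c l)) = 0" "l \<in> S"
  shows "c l = 0"
proof -
  have "\<And>l. c l * cnj (c l) = complex_of_real ((cmod (c l))^2)"
    using cnj_mult_self by (simp add: mult.commute)
  then have "complex_of_real (\<Sum>l\<in>S. (cmod (c l))^2) = 0"
    using assms(2) by simp
  then have "(\<Sum>l\<in>S. (cmod (c l))^2) = 0"
    by (simp only: of_real_eq_0_iff)
  then show ?thesis
    using assms(1,3) by (simp add: sum_nonneg_eq_0_iff)
qed

lemma cinner_self_eq_0:
  assumes "cinner y y = (0::complex)"
  shows "y = 0"
proof -
  have "(\<Sum>i\<in>UNIV. y$i * cnj (y$i)) = 0"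
    using assms by (simp add: cinner_def mult.commute)
  then have "y$i = 0" for i
    using sum_cnj_mult_self_eq_0[of UNIV "\<lambda>i. y$i" i] by simp
  then show ?thesis
    by (simp add: vec_eq_iff)
qed

lemma matrix_vector_mult_axis: "((P::complex^'n::finite^'m) *v axis s 1)$i = P$i$s"
proof -
  have "\<And>j. P$i$j * axis s 1 $ j = (if j = s then P$i$s else 0)"
    by (simp add: axis_def)
  then show ?thesis
    by (simp add: matrix_vector_mult_def)
qed

lemma matrix_diff_rdistrib:
  "((A::complex^'n::finite^'m::finite) - B) ** (C::complex^'p::finite^'n) = A ** C - B ** C"
  by (simp add: matrix_matrix_mult_def vec_eq_iff left_diff_distrib sum_subtractf)

lemma matrix_diff_ldistrib:
  "(A::complex^'n::finite^'m::finite) ** ((B::complex^'p::finite^'n) - C) = A ** B - A ** C"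
  by (simp add: matrix_matrix_mult_def vec_eq_iff right_diff_distrib sum_subtractf)

lemma cadj_cadj [simp]: "cadj (cadj X) = X"
  by (simp add: cadj_def vec_eq_iff)

lemma cadj_zero [simp]: "cadj 0 = 0"
  by (simp add: cadj_def vec_eq_iff)

lemma cadj_mult: "cadj (X ** Y) = cadj Y ** cadj (X::'n::finite cmat)"
  by (simp add: cadj_def matrix_matrix_mult_def vec_eq_iff mult.commute)

lemma hermitian_entry: "hermitian P \<Longrightarrow> cnj (P$j$i) = P$i$j"
  unfolding hermitian_def cadj_def by (metis vec_lambda_beta)

lemma cinner_hermitian:
  fixes P :: "'n::finite cmat"
  assumes "hermitian P"
  shows "cinner x (P *v y) = cinner (P *v x) y"
proof -
  have "cinner x (P *v y) = (\<Sum>i\<in>UNIV. \<Sum>j\<in>UNIV. cnj (x$i) * P$i$j * y$j)"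
    by (simp add: cinner_def matrix_vector_mult_def sum_distrib_left mult.assoc)
  also have "\<dots> = (\<Sum>j\<in>UNIV. \<Sum>i\<in>UNIV. cnj (x$i) * P$i$j * y$j)"
    by (rule sum.swap)
  also have "\<dots> = cinner (P *v x) y"
    by (simp add: cinner_def matrix_vector_mult_def sum_distrib_right hermitian_entry[OF assms] mult_ac)
      (simp add: sum_distrib_left)
  finally show ?thesis .
qed

lemma hermitian_diag_real: "hermitian P \<Longrightarrow> P$s$s = complex_of_real (Re (P$s$s))"
  using hermitian_entry[of P s s] by (simp add: complex_eq_iff)

lemma orth_proj_hermitian: "orth_proj W \<Longrightarrow> hermitian W"
  by (simp add: orth_proj_def hermitian_def)

lemma perp_hermitian: "orth_proj W \<Longrightarrow> hermitian (perp W)"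
  by (simp add: hermitian_def perp_def orth_proj_def cadj_def vec_eq_iff mat_def)

lemma orth_proj_mult_perp: "orth_proj W \<Longrightarrow> W ** perp W = 0"
  by (simp add: perp_def matrix_diff_ldistrib orth_proj_def)

lemma psd_iff: "psd P \<longleftrightarrow> hermitian P \<and> (\<forall>v. 0 \<le> Re (cinner v (P *v v)))"
  by (simp add: psd_def cinner_def)

lemma psd_hermitian: "psd P \<Longrightarrow> hermitian P"
  by (simp add: psd_def)

lemma psd_quadratic_nonneg: "psd P \<Longrightarrow> 0 \<le> Re (cinner v (P *v v))"
  by (simp add: psd_iff)

lemma psd_diag_nonneg: "psd P \<Longrightarrow> 0 \<le> Re (P$s$s)"
  using psd_quadratic_nonneg[of P "axis s 1"] by (simp add: cinner_axis_left matrix_vector_mult_axis)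

lemma matrix_vector_mult_smult: "(A::complex^'n::finite^'m) *v (c *s x) = c *s (A *v x)"
  by (simp add: matrix_vector_mult_def vec_eq_iff sum_distrib_left mult_ac)

lemma hermitian_quadratic_shift:
  fixes P :: "'n::finite cmat"
  assumes "hermitian P"
  shows "cinner (v - c *s axis s 1) (P *v (v - c *s axis s 1)) =
     cinner v (P *v v) - c * cnj ((P *v v)$s) - cnj c * (P *v v)$s + cnj c * c * P$s$s"
proof -
  have "cinner v (P *v axis s 1) = cnj ((P *v v)$s)"
    by (metis cinner_hermitian[OF assms] cnj_cinner cinner_axis_left)
  moreover have "cinner (axis s 1) (P *v axis s 1) = P$s$s"
    by (simp add: cinner_axis_left matrix_vector_mult_axis)
  ultimately show ?thesis
    by (simp add: matrix_vector_mult_diff_distrib matrix_vector_mult_smult cinner_diff_left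
        cinner_diff_right cinner_smult_left cinner_smult_right cinner_axis_left algebra_simps)
qed

lemma psd_column_zero:
  fixes P :: "'n::finite cmat"
  assumes "psd P" "P$s$s = 0"
  shows "P$i$s = 0"
proof (rule ccontr)
  assume ne: "P$i$s \<noteq> 0"
  define a where "a = P$i$s"
  have H: "hermitian P"
    using assms(1) by (rule psd_hermitian)
  have Pi_s: "(P *v axis i 1)$s = cnj a"
    using hermitian_entry[OF H, of i s] by (simp add: matrix_vector_mult_axis a_def)
  \<comment> \<open>at \<open>e\<^sub>i - t a\<^sup>* e\<^sub>s\<close> the quadratic form is \<open>P\<^sub>i\<^sub>i - 2t\<bar>a\<bar>\<^sup>2\<close>, negative for this \<open>t\<close>\<close>
  define t :: real where "t = (Re (P$i$i) + 1) / (2 * (cmod a)^2)"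
  define c where "c = complex_of_real t * cnj a"
  have "0 \<le> Re (cinner (axis i 1 - c *s axis s 1) (P *v (axis i 1 - c *s axis s 1)))"
    by (rule psd_quadratic_nonneg[OF assms(1)])
  also have "cinner (axis i 1 - c *s axis s 1) (P *v (axis i 1 - c *s axis s 1)) =
      P$i$i - c * a - cnj c * cnj a"
    unfolding hermitian_quadratic_shift[OF H] Pi_s using assms(2)
    by (simp add: cinner_axis_left matrix_vector_mult_axis)
  also have "c * a = complex_of_real (t * (cmod a)^2)"
    unfolding c_def using cnj_mult_self[of a] by (simp add: mult_ac)
  also have "cnj c * cnj a = complex_of_real (t * (cmod a)^2)"
    unfolding c_def using cnj_mult_self[of a] by (simp add: mult_ac)
  finally have "0 \<le> Re (P$i$i) - 2 * (t * (cmod a)^2)"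
    by simp
  moreover have "t * (cmod a)^2 = (Re (P$i$i) + 1) / 2"
    using ne unfolding t_def a_def by (simp add: field_simps)
  ultimately show False
    by simp
qed

lemma psd_schur_complement_nonneg:
  fixes P :: "'n::finite cmat"
  assumes psdP: "psd P" and pos: "0 < Re (P$s$s)"
  shows "0 \<le> Re (cinner v (P *v v) - (P *v v)$s * cnj ((P *v v)$s) / P$s$s)"
proof -
  have H: "hermitian P"
    using psdP by (rule psd_hermitian)
  define d where "d = Re (P$s$s)"
  have Pss: "P$s$s = complex_of_real d"
    unfolding d_def by (rule hermitian_diag_real[OF H])
  define z where "z = (P *v v)$s"
  \<comment> \<open>the quadratic form of \<open>P\<close> is minimal along \<open>v - c e\<^sub>s\<close> at this \<open>c\<close>\<close>
  define c where "c = z / complex_of_real d"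
  have "0 \<le> Re (cinner (v - c *s axis s 1) (P *v (v - c *s axis s 1)))"
    by (rule psd_quadratic_nonneg[OF psdP])
  also have "cinner (v - c *s axis s 1) (P *v (v - c *s axis s 1)) =
      cinner v (P *v v) - c * cnj z - cnj c * z + cnj c * c * complex_of_real d"
    unfolding hermitian_quadratic_shift[OF H] z_def Pss by simp
  also have "\<dots> = cinner v (P *v v) - z * cnj z / complex_of_real d"
    using pos unfolding c_def d_def by (simp add: field_simps)
  finally show ?thesis
    by (simp add: z_def Pss)
qed

lemma psd_subtract_pivot:
  fixes P :: "'n::finite cmat"
  assumes psdP: "psd P" and pos: "0 < Re (P$s$s)"
  defines "b \<equiv> \<chi> i. P$i$s / complex_of_real (sqrt (Re (P$s$s)))"
  shows "psd (\<chi> i j. P$i$j - b$i * cnj (b$j))" and "P$s$j - b$s * cnj (b$j) = 0"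
proof -
  define P' where "P' = (\<chi> i j. P$i$j - b$i * cnj (b$j))"
  define r where "r = complex_of_real (sqrt (Re (P$s$s)))"
  have H: "hermitian P"
    using psdP by (rule psd_hermitian)
  have cr: "cnj r = r"
    by (simp add: r_def)
  have rr: "r * r = P$s$s"
    using pos hermitian_diag_real[OF H, of s] by (simp add: r_def flip: of_real_mult)
  have b: "b = (\<chi> i. P$i$s / r)"
    by (simp add: b_def r_def)
  have P'v: "P' *v v = P *v v - cinner b v *s b" for v
    unfolding P'_def matrix_vector_mult_def cinner_def
    by (simp add: vec_eq_iff right_diff_distrib sum_subtractf sum_distrib_left mult_ac)
  have bv: "cinner b v = (P *v v)$s / r" for v
    by (simp add: b cinner_def matrix_vector_mult_def cr hermitian_entry[OF H] sum_divide_distrib)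
  have "cinner v (P' *v v) = cinner v (P *v v) - (P *v v)$s * cnj ((P *v v)$s) / P$s$s" for v
  proof -
    have "cinner v b = cnj (cinner b v)"
      by (simp add: cnj_cinner)
    moreover have "cinner b v * cnj (cinner b v) = (P *v v)$s * cnj ((P *v v)$s) / P$s$s"
      unfolding bv rr[symmetric] by (simp add: cr)
    ultimately show ?thesis
      unfolding P'v cinner_diff_right cinner_smult_right by (simp add: mult.commute)
  qed
  moreover have "hermitian P'"
    unfolding hermitian_def cadj_def P'_def
    by (simp add: vec_eq_iff hermitian_entry[OF H] mult.commute)
  ultimately show "psd (\<chi> i j. P$i$j - b$i * cnj (b$j))"
    using psd_schur_complement_nonneg[OF psdP pos] by (simp add: psd_iff P'_def)
  have "P$s$j - b$s * cnj (b$j) = P$s$j - P$s$s * cnj (P$j$s) / (r * r)"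
    by (simp add: b cr)
  also have "\<dots> = 0"
    using pos by (simp add: rr hermitian_entry[OF H] complex_eq_iff)
  finally show "P$s$j - b$s * cnj (b$j) = 0" .
qed

lemma psd_gram_supported:
  fixes P :: "'n::finite cmat"
  assumes "finite S" "psd P" "\<And>i j. i \<notin> S \<Longrightarrow> P$i$j = 0"
  shows "\<exists>(n::nat) b. \<forall>i j. P$i$j = (\<Sum>l<n. b l $ i * cnj (b l $ j))"
  using assms
proof (induction S arbitrary: P rule: finite_induct)
  case empty
  then show ?case
    by (intro exI[of _ 0]) simp
next
  case (insert s S)
  have H: "hermitian P"
    using insert.prems(1) by (rule psd_hermitian)
  show ?case
  proof (cases "Re (P$s$s) = 0")
    case True
    then have "P$i$s = 0" for i
      using hermitian_diag_real[OF H, of s] psd_column_zero[OF insert.prems(1)] by simp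
    then have "P$i$j = 0" if "i \<notin> S" for i j
      using that insert.prems(2) hermitian_entry[OF H, of s j] by (cases "i = s") auto
    then show ?thesis
      using insert.IH insert.prems(1) by blast
  next
    case False
    then have pos: "0 < Re (P$s$s)"
      using psd_diag_nonneg[OF insert.prems(1), of s] by simp
    define b where "b = (\<chi> i. P$i$s / complex_of_real (sqrt (Re (P$s$s))))"
    define P' where "P' = (\<chi> i j. P$i$j - b$i * cnj (b$j))"
    have "psd P'"
      unfolding P'_def b_def by (rule psd_subtract_pivot(1)[OF insert.prems(1) pos])
    moreover have "P'$i$j = 0" if "i \<notin> S" for i j
      using that insert.prems(2) psd_subtract_pivot(2)[OF insert.prems(1) pos, of j]
      by (cases "i = s") (simp_all add: P'_def b_def)
    ultimately obtain n b' where b': "\<forall>i j. P'$i$j = (\<Sum>l<(n::nat). b' l $ i * cnj (b' l $ j))"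
      using insert.IH by blast
    have "P$i$j = (\<Sum>l<Suc n. (b'(n := b)) l $ i * cnj ((b'(n := b)) l $ j))" for i j
      using b' by (simp add: P'_def diff_eq_eq)
    then show ?thesis
      by blast
  qed
qed

lemma psd_gram:
  fixes P :: "'n::finite cmat"
  assumes "psd P"
  shows "\<exists>(n::nat) b. \<forall>i j. P$i$j = (\<Sum>l<n. b l $ i * cnj (b l $ j))"
  using psd_gram_supported[of UNIV P] assms by simp

lemma cinner_gram:
  fixes \<gamma> :: "'n::finite cmat"
  assumes "\<forall>i j. \<gamma>$i$j = (\<Sum>l<n. b l $ i * cnj (b l $ j))"
  shows "cinner p (\<gamma> *v q) = (\<Sum>l<(n::nat). cinner p (b l) * cinner (b l) q)"
proof -
  have "cinner p (\<gamma> *v q) = (\<Sum>i\<in>UNIV. \<Sum>j\<in>UNIV. \<Sum>l<n. cnj (p$i) * b l $ i * (cnj (b l $ j) * q$j))"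
    using assms by (simp add: cinner_def matrix_vector_mult_def sum_distrib_left sum_distrib_right mult_ac)
  also have "\<dots> = (\<Sum>l<n. \<Sum>i\<in>UNIV. \<Sum>j\<in>UNIV. cnj (p$i) * b l $ i * (cnj (b l $ j) * q$j))"
    by (subst sum.swap) (rule sum.cong[OF refl], rule sum.swap)
  also have "\<dots> = (\<Sum>l<n. cinner p (b l) * cinner (b l) q)"
    by (simp add: cinner_def sum_product)
  finally show ?thesis .
qed

section \<open>The maps \<open>G\<^sub>\<gamma>\<close> and \<open>F\<^sub>\<gamma>\<close>\<close>

lemma sum_UNIV_prod:
  "(\<Sum>p\<in>(UNIV::('a::finite \<times> 'b::finite) set). f p) = (\<Sum>a\<in>UNIV. \<Sum>b\<in>UNIV. f (a, b))"
proof -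
  have "(\<Sum>a\<in>UNIV. \<Sum>b\<in>UNIV. f (a, b)) = (\<Sum>p\<in>UNIV \<times> UNIV. (\<lambda>(a, b). f (a, b)) p)"
    by (rule sum.cartesian_product)
  then show ?thesis
    by simp
qed

lemma sum_UNIV_swap: "(\<Sum>p\<in>UNIV. f p) = (\<Sum>p\<in>UNIV. f (prod.swap p))"
  by (rule sum.reindex_bij_witness[of _ prod.swap prod.swap]) auto

lemma sum_swap_pairs:
  "(\<Sum>a\<in>A. \<Sum>b\<in>B. \<Sum>c\<in>C. \<Sum>d\<in>D. f a b c d) = (\<Sum>c\<in>C. \<Sum>d\<in>D. \<Sum>a\<in>A. \<Sum>b\<in>B. f a b c d)"
proof -
  have "(\<Sum>a\<in>A. \<Sum>b\<in>B. \<Sum>c\<in>C. \<Sum>d\<in>D. f a b c d) = (\<Sum>a\<in>A. \<Sum>c\<in>C. \<Sum>b\<in>B. \<Sum>d\<in>D. f a b c d)"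
    by (rule sum.cong[OF refl], rule sum.swap)
  also have "\<dots> = (\<Sum>c\<in>C. \<Sum>a\<in>A. \<Sum>b\<in>B. \<Sum>d\<in>D. f a b c d)"
    by (rule sum.swap)
  also have "\<dots> = (\<Sum>c\<in>C. \<Sum>a\<in>A. \<Sum>d\<in>D. \<Sum>b\<in>B. f a b c d)"
    by (rule sum.cong[OF refl], rule sum.cong[OF refl], rule sum.swap)
  also have "\<dots> = (\<Sum>c\<in>C. \<Sum>d\<in>D. \<Sum>a\<in>A. \<Sum>b\<in>B. f a b c d)"
    by (rule sum.cong[OF refl], rule sum.swap)
  finally show ?thesis .
qed

definition tensor_axis :: "complex^'k::finite \<Rightarrow> 'm::finite \<Rightarrow> complex^('k \<times> 'm)" where
  "tensor_axis x j = (\<chi> p. if snd p = j then x $ fst p else 0)"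

definition outer :: "complex^'n::finite \<Rightarrow> complex^'n \<Rightarrow> 'n cmat" where
  "outer x y = (\<chi> i j. x$i * cnj (y$j))"

lemma cinner_tensor_axis_left: "cinner (tensor_axis w j) v = (\<Sum>a\<in>UNIV. cnj (w$a) * v$(a, j))"
proof -
  have "cnj (tensor_axis w j $ (a, b)) * v$(a, b) = (if b = j then cnj (w$a) * v$(a, j) else 0)" for a b
    by (simp add: tensor_axis_def)
  then show ?thesis
    by (simp add: cinner_def sum_UNIV_prod)
qed

lemma matrix_vector_mult_tensor_axis:
  "((M::complex^('k::finite \<times> 'm::finite)^'n::finite) *v tensor_axis u j) $ p = (\<Sum>a\<in>UNIV. M$p$(a, j) * u$a)"
proof -
  have "M$p$(a, b) * tensor_axis u j $ (a, b) = (if b = j then M$p$(a, j) * u$a else 0)" for a b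
    by (simp add: tensor_axis_def)
  then show ?thesis
    by (simp add: matrix_vector_mult_def sum_UNIV_prod)
qed

lemma Gmap_outer:
  "Gmap \<gamma> (outer u w) $ j $ j' = cinner (tensor_axis w j) (\<gamma> *v tensor_axis u j')"
  by (simp add: Gmap_def outer_def cinner_tensor_axis_left matrix_vector_mult_tensor_axis
      sum_distrib_left mult_ac)

lemma mtrace_mult: "mtrace (M ** N) = (\<Sum>j\<in>UNIV. \<Sum>j'\<in>UNIV. M$j$j' * N$j'$j)"
  by (simp add: mtrace_def matrix_matrix_mult_def)

lemma cinner_FG:
  "cinner w (FG \<gamma> X *v u) = mtrace (Gmap \<gamma> (outer u w) ** Gmap \<gamma> X)"
proof -
  define G where "G = Gmap \<gamma> X"
  have "cinner w (FG \<gamma> X *v u) = (\<Sum>a\<in>UNIV. \<Sum>a'\<in>UNIV. \<Sum>j\<in>UNIV. \<Sum>j'\<in>UNIV.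
      cnj (w$a) * \<gamma>$(a, j)$(a', j') * u$a' * G$j'$j)"
    by (simp add: cinner_def FG_def Fmap_def G_def matrix_vector_mult_def sum_distrib_left
        sum_distrib_right mult_ac)
  also have "\<dots> = (\<Sum>j\<in>UNIV. \<Sum>j'\<in>UNIV. \<Sum>a\<in>UNIV. \<Sum>a'\<in>UNIV.
      cnj (w$a) * \<gamma>$(a, j)$(a', j') * u$a' * G$j'$j)"
    by (rule sum_swap_pairs)
  also have "\<dots> = mtrace (Gmap \<gamma> (outer u w) ** G)"
    by (simp add: mtrace_mult Gmap_def outer_def sum_distrib_right mult_ac)
      (simp add: sum_distrib_left mult_ac)
  finally show ?thesis
    by (simp add: G_def)
qed

lemma Gmap_cadj:
  assumes "hermitian \<gamma>"
  shows "Gmap \<gamma> (cadj X) = cadj (Gmap \<gamma> X)"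
proof -
  have "Gmap \<gamma> (cadj X) $ j $ j' = cadj (Gmap \<gamma> X) $ j $ j'" for j j'
  proof -
    have "cadj (Gmap \<gamma> X) $ j $ j' = (\<Sum>a\<in>UNIV. \<Sum>a'\<in>UNIV. \<gamma>$(a', j)$(a, j') * cnj (X$a'$a))"
      by (simp add: cadj_def Gmap_def hermitian_entry[OF assms])
    also have "\<dots> = Gmap \<gamma> (cadj X) $ j $ j'"
      by (simp add: Gmap_def cadj_def) (rule sum.swap)
    finally show ?thesis
      by simp
  qed
  then show ?thesis
    by (simp add: vec_eq_iff)
qed

lemma cinner_Gmap_gram:
  fixes \<gamma> :: "('k::finite \<times> 'm::finite) cmat" and v :: "complex^'m" and n :: nat
  assumes X: "\<forall>i j. X$i$j = (\<Sum>l<n. x l $ i * cnj (x l $ j))"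
  defines "xv \<equiv> \<lambda>l. \<chi> p. x l $ fst p * v $ snd p"
  shows "cinner v (Gmap \<gamma> X *v v) = (\<Sum>l<n. cinner (xv l) (\<gamma> *v xv l))"
proof -
  define f where "f l a j a' j' = cnj (x l $ a) * cnj (v$j) * \<gamma>$(a, j)$(a', j') * (x l $ a' * v $ j')"
    for l a j a' j'
  have "cinner v (Gmap \<gamma> X *v v) = (\<Sum>j\<in>UNIV. \<Sum>j'\<in>UNIV. \<Sum>a\<in>UNIV. \<Sum>a'\<in>UNIV. \<Sum>l<n. f l a j a' j')"
    by (simp add: cinner_def matrix_vector_mult_def Gmap_def X f_def sum_distrib_left
        sum_distrib_right mult_ac)
  also have "\<dots> = (\<Sum>j\<in>UNIV. \<Sum>j'\<in>UNIV. \<Sum>a\<in>UNIV. \<Sum>l<n. \<Sum>a'\<in>UNIV. f l a j a' j')"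
    by (intro sum.cong refl) (rule sum.swap)
  also have "\<dots> = (\<Sum>j\<in>UNIV. \<Sum>j'\<in>UNIV. \<Sum>l<n. \<Sum>a\<in>UNIV. \<Sum>a'\<in>UNIV. f l a j a' j')"
    by (intro sum.cong refl) (rule sum.swap)
  also have "\<dots> = (\<Sum>j\<in>UNIV. \<Sum>l<n. \<Sum>j'\<in>UNIV. \<Sum>a\<in>UNIV. \<Sum>a'\<in>UNIV. f l a j a' j')"
    by (intro sum.cong refl) (rule sum.swap)
  also have "\<dots> = (\<Sum>l<n. \<Sum>j\<in>UNIV. \<Sum>j'\<in>UNIV. \<Sum>a\<in>UNIV. \<Sum>a'\<in>UNIV. f l a j a' j')"
    by (rule sum.swap)
  also have "\<dots> = (\<Sum>l<n. \<Sum>a\<in>UNIV. \<Sum>a'\<in>UNIV. \<Sum>j\<in>UNIV. \<Sum>j'\<in>UNIV. f l a j a' j')"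
    by (intro sum.cong refl) (rule sum_swap_pairs)
  also have "\<dots> = (\<Sum>l<n. \<Sum>a\<in>UNIV. \<Sum>j\<in>UNIV. \<Sum>a'\<in>UNIV. \<Sum>j'\<in>UNIV. f l a j a' j')"
    by (intro sum.cong refl) (rule sum.swap)
  also have "\<dots> = (\<Sum>l<n. cinner (xv l) (\<gamma> *v xv l))"
    by (simp add: cinner_def matrix_vector_mult_def sum_UNIV_prod xv_def f_def sum_distrib_left
        sum_distrib_right mult_ac)
  finally show ?thesis .
qed

lemma psd_Gmap:
  assumes "psd \<gamma>" "psd X"
  shows "psd (Gmap \<gamma> X)"
proof -
  obtain n :: nat and x where X: "\<forall>i j. X$i$j = (\<Sum>l<n. x l $ i * cnj (x l $ j))"
    using psd_gram[OF assms(2)] by blast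
  have "hermitian (Gmap \<gamma> X)"
    using Gmap_cadj[OF psd_hermitian[OF assms(1)], of X] psd_hermitian[OF assms(2)]
    by (simp add: hermitian_def)
  moreover have "0 \<le> Re (cinner v (Gmap \<gamma> X *v v))" for v
    unfolding cinner_Gmap_gram[OF X] Re_sum
    by (rule sum_nonneg) (rule psd_quadratic_nonneg[OF assms(1)])
  ultimately show ?thesis
    by (simp add: psd_iff)
qed

definition tensor_swap :: "('k::finite \<times> 'm::finite) cmat \<Rightarrow> ('m \<times> 'k) cmat" where
  "tensor_swap \<gamma> = (\<chi> p q. \<gamma> $ prod.swap p $ prod.swap q)"

lemma psd_tensor_swap:
  fixes \<gamma> :: "('k::finite \<times> 'm::finite) cmat"
  assumes "psd \<gamma>"
  shows "psd (tensor_swap \<gamma>)"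
proof -
  have "hermitian (tensor_swap \<gamma>)"
    using hermitian_entry[OF psd_hermitian[OF assms]]
    by (simp add: hermitian_def cadj_def tensor_swap_def vec_eq_iff)
  moreover have "cinner v (tensor_swap \<gamma> *v v) = cinner (\<chi> p. v $ prod.swap p) (\<gamma> *v (\<chi> p. v $ prod.swap p))"
    for v :: "complex^('m \<times> 'k)"
  proof -
    have inner: "(\<Sum>q\<in>UNIV. \<gamma> $ p $ prod.swap q * v $ q) = (\<Sum>q\<in>UNIV. \<gamma> $ p $ q * v $ prod.swap q)" for p
      by (subst sum_UNIV_swap) simp
    have "cinner v (tensor_swap \<gamma> *v v) =
        (\<Sum>p\<in>UNIV. cnj (v $ prod.swap p) * (\<Sum>q\<in>UNIV. \<gamma> $ p $ prod.swap q * v $ q))"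
      unfolding cinner_def matrix_vector_mult_def tensor_swap_def by (subst sum_UNIV_swap) simp
    then show ?thesis
      by (simp add: inner cinner_def matrix_vector_mult_def)
  qed
  ultimately show ?thesis
    using assms by (simp add: psd_iff)
qed

lemma Fmap_eq_Gmap_tensor_swap: "Fmap \<gamma> Y = Gmap (tensor_swap \<gamma>) Y"
  by (simp add: Fmap_def Gmap_def tensor_swap_def)

lemma psd_Fmap: "psd \<gamma> \<Longrightarrow> psd Y \<Longrightarrow> psd (Fmap \<gamma> Y)"
  by (simp add: Fmap_eq_Gmap_tensor_swap psd_Gmap psd_tensor_swap)

lemma FG_positive: "psd \<gamma> \<Longrightarrow> positive_map (FG \<gamma>)"
  by (simp add: positive_map_def FG_def psd_Fmap psd_Gmap)

lemma tinner_eq_sum: "tinner X Y = (\<Sum>i\<in>UNIV. \<Sum>k\<in>UNIV. X$i$k * cnj (Y$i$k))"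
  by (simp add: tinner_def mtrace_def matrix_matrix_mult_def cadj_def)

lemma cnj_tinner: "cnj (tinner X Y) = tinner Y X"
  by (simp add: tinner_eq_sum mult.commute)

lemma tinner_Gmap:
  assumes "hermitian \<gamma>"
  shows "tinner (Gmap \<gamma> X) Y = tinner X (Fmap \<gamma> Y)"
proof -
  define f where "f j j' a a' = \<gamma>$(a, j)$(a', j') * X$a'$a * cnj (Y$j$j')" for j j' a a'
  have "tinner (Gmap \<gamma> X) Y = (\<Sum>j\<in>UNIV. \<Sum>j'\<in>UNIV. \<Sum>a\<in>UNIV. \<Sum>a'\<in>UNIV. f j j' a a')"
    by (simp add: tinner_eq_sum Gmap_def f_def sum_distrib_right)
  also have "\<dots> = (\<Sum>j\<in>UNIV. \<Sum>j'\<in>UNIV. \<Sum>a'\<in>UNIV. \<Sum>a\<in>UNIV. f j j' a a')"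
    by (rule sum.cong[OF refl], rule sum.cong[OF refl], rule sum.swap)
  also have "\<dots> = (\<Sum>j'\<in>UNIV. \<Sum>j\<in>UNIV. \<Sum>a'\<in>UNIV. \<Sum>a\<in>UNIV. f j j' a a')"
    by (rule sum.swap)
  also have "\<dots> = (\<Sum>a'\<in>UNIV. \<Sum>a\<in>UNIV. \<Sum>j'\<in>UNIV. \<Sum>j\<in>UNIV. f j j' a a')"
    by (rule sum_swap_pairs)
  also have "\<dots> = tinner X (Fmap \<gamma> Y)"
    by (simp add: tinner_eq_sum Fmap_def f_def sum_distrib_left hermitian_entry[OF assms] mult_ac)
  finally show ?thesis .
qed

lemma tinner_Fmap: "hermitian \<gamma> \<Longrightarrow> tinner (Fmap \<gamma> Y) X = tinner Y (Gmap \<gamma> X)"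
  by (metis tinner_Gmap cnj_tinner)

lemma FG_self_adjoint: "hermitian \<gamma> \<Longrightarrow> self_adjoint_map (FG \<gamma>)"
  by (simp add: self_adjoint_map_def FG_def tinner_Fmap tinner_Gmap)

section \<open>Invariance of \<open>W\<M>\<^sub>kW\<close> depends only on the range of \<open>\<gamma>\<close>\<close>

text \<open>\<open>cross_null \<gamma> x w\<close> is the entrywise form of \<open>\<gamma> (xw\<^sup>* \<otimes> 1) \<gamma> = 0\<close>.\<close>

definition cross_null :: "('k::finite \<times> 'm::finite) cmat \<Rightarrow> complex^'k \<Rightarrow> complex^'k \<Rightarrow> bool" where
  "cross_null \<gamma> x w \<longleftrightarrow>
     (\<forall>p q. (\<Sum>j\<in>UNIV. cinner p (\<gamma> *v tensor_axis x j) * cinner (tensor_axis w j) (\<gamma> *v q)) = 0)"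

lemma trace_Gmap_outer_gram:
  fixes \<gamma> :: "('k::finite \<times> 'm::finite) cmat" and x w :: "complex^'k" and n :: nat
  assumes gram: "\<forall>i j. \<gamma>$i$j = (\<Sum>l<n. b l $ i * cnj (b l $ j))"
  defines "c \<equiv> \<lambda>l l'. \<Sum>j\<in>UNIV. cinner (b l') (tensor_axis x j) * cinner (tensor_axis w j) (b l)"
  shows "mtrace (Gmap \<gamma> (outer w w) ** Gmap \<gamma> (outer x x)) = (\<Sum>l<n. \<Sum>l'<n. c l l' * cnj (c l l'))"
proof -
  define T where "T l l' j j' = (cinner (tensor_axis w j) (b l) * cinner (b l) (tensor_axis w j')) *
      (cinner (tensor_axis x j') (b l') * cinner (b l') (tensor_axis x j))" for l l' j j'
  have "mtrace (Gmap \<gamma> (outer w w) ** Gmap \<gamma> (outer x x)) =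
        (\<Sum>j\<in>UNIV. \<Sum>j'\<in>UNIV. \<Sum>l<n. \<Sum>l'<n. T l l' j j')"
    by (simp add: mtrace_mult Gmap_outer cinner_gram[OF gram] T_def sum_product)
  also have "\<dots> = (\<Sum>l<n. \<Sum>l'<n. \<Sum>j\<in>UNIV. \<Sum>j'\<in>UNIV. T l l' j j')"
    by (rule sum_swap_pairs)
  also have "\<dots> = (\<Sum>l<n. \<Sum>l'<n. c l l' * cnj (c l l'))"
  proof -
    have "c l l' * cnj (c l l') = (\<Sum>j\<in>UNIV. \<Sum>j'\<in>UNIV. T l l' j j')" for l l'
      by (simp add: c_def T_def sum_product cnj_cinner mult_ac)
    then show ?thesis
      by simp
  qed
  finally show ?thesis .
qed

lemma cross_null_gram:
  fixes \<gamma> :: "('k::finite \<times> 'm::finite) cmat" and n :: nat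
  assumes gram: "\<forall>i j. \<gamma>$i$j = (\<Sum>l<n. b l $ i * cnj (b l $ j))"
    and c0: "\<And>l l'. l < n \<Longrightarrow> l' < n \<Longrightarrow>
      (\<Sum>j\<in>UNIV. cinner (b l') (tensor_axis x j) * cinner (tensor_axis w j) (b l)) = 0"
  shows "cross_null \<gamma> x w"
  unfolding cross_null_def
proof (intro allI)
  fix p q
  define U where "U j l' l = cinner p (b l') * cinner (b l') (tensor_axis x j) *
      (cinner (tensor_axis w j) (b l) * cinner (b l) q)" for j l' l
  have "(\<Sum>j\<in>UNIV. cinner p (\<gamma> *v tensor_axis x j) * cinner (tensor_axis w j) (\<gamma> *v q)) =
        (\<Sum>j\<in>UNIV. \<Sum>l'<n. \<Sum>l<n. U j l' l)"
    by (simp add: cinner_gram[OF gram] U_def sum_product)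
  also have "\<dots> = (\<Sum>l'<n. \<Sum>l<n. \<Sum>j\<in>UNIV. U j l' l)"
    by (subst sum.swap) (rule sum.cong[OF refl], rule sum.swap)
  also have "\<dots> = (\<Sum>l'<n. \<Sum>l<n. cinner p (b l') *
      (\<Sum>j\<in>UNIV. cinner (b l') (tensor_axis x j) * cinner (tensor_axis w j) (b l)) * cinner (b l) q)"
    by (simp add: U_def sum_distrib_left sum_distrib_right mult_ac)
  also have "\<dots> = 0"
    using c0 by simp
  finally show "(\<Sum>j\<in>UNIV. cinner p (\<gamma> *v tensor_axis x j) * cinner (tensor_axis w j) (\<gamma> *v q)) = 0" .
qed

lemma cross_null_of_trace_eq_0:
  fixes \<gamma> :: "('k::finite \<times> 'm::finite) cmat"
  assumes "psd \<gamma>" and trace: "mtrace (Gmap \<gamma> (outer w w) ** Gmap \<gamma> (outer x x)) = 0"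
  shows "cross_null \<gamma> x w"
proof -
  obtain n :: nat and b where gram: "\<forall>i j. \<gamma>$i$j = (\<Sum>l<n. b l $ i * cnj (b l $ j))"
    using psd_gram[OF assms(1)] by blast
  define c where "c l l' = (\<Sum>j\<in>UNIV. cinner (b l') (tensor_axis x j) * cinner (tensor_axis w j) (b l))"
    for l l'
  \<comment> \<open>the trace is the squared Hilbert-Schmidt norm of the matrix \<open>c\<close>\<close>
  have "(\<Sum>(l, l')\<in>{..<n} \<times> {..<n}. c l l' * cnj (c l l')) = 0"
    using trace trace_Gmap_outer_gram[OF gram, of w x] by (simp add: c_def sum.cartesian_product)
  then have c0: "c l l' = 0" if "l < n" "l' < n" for l l'
    using sum_cnj_mult_self_eq_0[of "{..<n} \<times> {..<n}" "\<lambda>(l, l'). c l l'" "(l, l')"] that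
    by (simp add: case_prod_unfold)
  show ?thesis
    by (rule cross_null_gram[OF gram]) (use c0 in \<open>simp add: c_def\<close>)
qed

lemma cross_null_transfer:
  assumes "hermitian \<gamma>" "hermitian A" "img \<gamma> = img A" "cross_null \<gamma> x w"
  shows "cross_null A x w"
  unfolding cross_null_def
proof (intro allI)
  fix p q
  obtain p' q' where pq: "A *v p = \<gamma> *v p'" "A *v q = \<gamma> *v q'"
    using assms(3) unfolding img_def by (metis rangeE rangeI)
  have "(\<Sum>j\<in>UNIV. cinner p (A *v tensor_axis x j) * cinner (tensor_axis w j) (A *v q)) =
        (\<Sum>j\<in>UNIV. cinner (A *v p) (tensor_axis x j) * cinner (tensor_axis w j) (A *v q))"
    by (simp add: cinner_hermitian[OF assms(2)])
  also have "\<dots> = (\<Sum>j\<in>UNIV. cinner p' (\<gamma> *v tensor_axis x j) * cinner (tensor_axis w j) (\<gamma> *v q'))"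
    by (simp add: pq cinner_hermitian[OF assms(1)])
  also have "\<dots> = 0"
    using assms(4) by (simp add: cross_null_def)
  finally show "(\<Sum>j\<in>UNIV. cinner p (A *v tensor_axis x j) * cinner (tensor_axis w j) (A *v q)) = 0" .
qed

lemma cross_null_swap:
  assumes "hermitian \<gamma>" "cross_null \<gamma> x w"
  shows "(\<Sum>j\<in>UNIV. cinner q (\<gamma> *v tensor_axis w j) * cinner (tensor_axis x j) (\<gamma> *v p)) = 0"
proof -
  have "(\<Sum>j\<in>UNIV. cinner p (\<gamma> *v tensor_axis x j) * cinner (tensor_axis w j) (\<gamma> *v q)) = 0"
    using assms(2) by (simp add: cross_null_def)
  then have "cnj (\<Sum>j\<in>UNIV. cinner p (\<gamma> *v tensor_axis x j) * cinner (tensor_axis w j) (\<gamma> *v q)) = 0"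
    by simp
  moreover have "cnj (\<Sum>j\<in>UNIV. cinner p (\<gamma> *v tensor_axis x j) * cinner (tensor_axis w j) (\<gamma> *v q)) =
     (\<Sum>j\<in>UNIV. cinner q (\<gamma> *v tensor_axis w j) * cinner (tensor_axis x j) (\<gamma> *v p))"
    by (simp add: cnj_cinner cinner_hermitian[OF assms(1)] mult.commute)
  ultimately show ?thesis
    by simp
qed

lemma matrix_mult_outer_left: "(W::'n::finite cmat) ** outer x y = outer (W *v x) y"
  by (simp add: outer_def matrix_matrix_mult_def matrix_vector_mult_def vec_eq_iff
      sum_distrib_left mult_ac)

lemma matrix_mult_outer_right: "outer x y ** (W::'n::finite cmat) = outer x (cadj W *v y)"
  by (simp add: outer_def matrix_matrix_mult_def matrix_vector_mult_def cadj_def vec_eq_iff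
      sum_distrib_left mult_ac)

lemma matrix_mult_entry_left:
  fixes P M :: "'n::finite cmat"
  assumes "hermitian P"
  shows "(P ** M)$i$k = cinner (P *v axis i 1) (M *v axis k 1)"
  by (simp add: cinner_hermitian[OF assms, symmetric] cinner_axis_left matrix_vector_mul_assoc
      matrix_vector_mult_axis)

lemma matrix_mult_entry_right:
  fixes P M :: "'n::finite cmat"
  shows "(M ** P)$i$k = cinner (axis i 1) (M *v (P *v axis k 1))"
  by (simp add: cinner_axis_left matrix_vector_mul_assoc matrix_vector_mult_axis)

lemma FG_invariant_imp_cross_null:
  assumes "psd \<gamma>" "orth_proj W" "FG \<gamma> ` sandw W W \<subseteq> sandw W W"
  shows "cross_null \<gamma> (W *v x) (perp W *v w)"
proof -
  define x' where "x' = W *v x"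
  define w' where "w' = perp W *v w"
  have "W *v x' = x'" "cadj W = W"
    using assms(2) by (simp_all add: x'_def matrix_vector_mul_assoc orth_proj_def)
  then have "W ** outer x' x' ** W = outer x' x'"
    by (simp add: matrix_mult_outer_left matrix_mult_outer_right)
  then have "outer x' x' \<in> sandw W W"
    unfolding sandw_def by (metis (mono_tags, lifting) mem_Collect_eq)
  then obtain E where E: "FG \<gamma> (outer x' x') = W ** E ** W"
    using assms(3) by (auto simp: sandw_def)
  have "W *v w' = 0"
    using orth_proj_mult_perp[OF assms(2)] by (simp add: w'_def matrix_vector_mul_assoc)
  then have "FG \<gamma> (outer x' x') *v w' = 0"
    by (simp add: E matrix_vector_mul_assoc[symmetric])
  then have "cinner w' (FG \<gamma> (outer x' x') *v w') = 0"
    by simp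
  then show ?thesis
    unfolding x'_def w'_def cinner_FG by (rule cross_null_of_trace_eq_0[OF assms(1)])
qed

lemma Gmap_sandwich:
  assumes "hermitian W"
  shows "Gmap \<gamma> (W ** E ** W) $ j $ j' =
     (\<Sum>b\<in>UNIV. \<Sum>c\<in>UNIV. E$b$c * Gmap \<gamma> (outer (W *v axis b 1) (W *v axis c 1)) $ j $ j')"
proof -
  have "Gmap \<gamma> (W ** E ** W) $ j $ j' = (\<Sum>a\<in>UNIV. \<Sum>a'\<in>UNIV. \<Sum>c\<in>UNIV. \<Sum>b\<in>UNIV.
      E$b$c * (W$c$a * \<gamma>$(a, j)$(a', j') * W$a'$b))"
    by (simp add: Gmap_def matrix_matrix_mult_def sum_distrib_left sum_distrib_right mult_ac)
  also have "\<dots> = (\<Sum>c\<in>UNIV. \<Sum>b\<in>UNIV. \<Sum>a\<in>UNIV. \<Sum>a'\<in>UNIV.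
      E$b$c * (W$c$a * \<gamma>$(a, j)$(a', j') * W$a'$b))"
    by (rule sum_swap_pairs)
  also have "\<dots> = (\<Sum>c\<in>UNIV. \<Sum>b\<in>UNIV. E$b$c * Gmap \<gamma> (outer (W *v axis b 1) (W *v axis c 1)) $ j $ j')"
    by (simp add: Gmap_def outer_def matrix_vector_mult_axis hermitian_entry[OF assms]
        sum_distrib_left mult_ac)
  also have "\<dots> = (\<Sum>b\<in>UNIV. \<Sum>c\<in>UNIV. E$b$c * Gmap \<gamma> (outer (W *v axis b 1) (W *v axis c 1)) $ j $ j')"
    by (rule sum.swap)
  finally show ?thesis .
qed

lemma cinner_FG_sandwich:
  assumes "hermitian W"
  shows "cinner w (FG \<gamma> (W ** E ** W) *v u) = (\<Sum>b\<in>UNIV. \<Sum>c\<in>UNIV. E$b$c *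
     mtrace (Gmap \<gamma> (outer u w) ** Gmap \<gamma> (outer (W *v axis b 1) (W *v axis c 1))))"
proof -
  have "cinner w (FG \<gamma> (W ** E ** W) *v u) = (\<Sum>j\<in>UNIV. \<Sum>j'\<in>UNIV. \<Sum>b\<in>UNIV. \<Sum>c\<in>UNIV.
      E$b$c * (Gmap \<gamma> (outer u w) $ j $ j' * Gmap \<gamma> (outer (W *v axis b 1) (W *v axis c 1)) $ j' $ j))"
    by (simp add: cinner_FG mtrace_mult Gmap_sandwich[OF assms] sum_distrib_left mult_ac)
  also have "\<dots> = (\<Sum>b\<in>UNIV. \<Sum>c\<in>UNIV. \<Sum>j\<in>UNIV. \<Sum>j'\<in>UNIV.
      E$b$c * (Gmap \<gamma> (outer u w) $ j $ j' * Gmap \<gamma> (outer (W *v axis b 1) (W *v axis c 1)) $ j' $ j))"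
    by (rule sum_swap_pairs)
  finally show ?thesis
    by (simp add: mtrace_mult sum_distrib_left)
qed

lemma perp_mult_FG_sandwich:
  assumes W: "orth_proj W" and null: "\<And>x w. cross_null \<gamma> (W *v x) (perp W *v w)"
  shows "perp W ** FG \<gamma> (W ** E ** W) = 0"
proof -
  define Q where "Q b c = Gmap \<gamma> (outer (W *v axis b 1) (W *v axis c 1))" for b c
  have "mtrace (Gmap \<gamma> (outer u (perp W *v w)) ** Q b c) = 0" for u w b c
  proof -
    have "mtrace (Gmap \<gamma> (outer u (perp W *v w)) ** Q b c) =
        (\<Sum>j'\<in>UNIV. \<Sum>j\<in>UNIV. cinner (tensor_axis (W *v axis c 1) j') (\<gamma> *v tensor_axis (W *v axis b 1) j) *
           cinner (tensor_axis (perp W *v w) j) (\<gamma> *v tensor_axis u j'))"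
      by (subst sum.swap) (simp add: mtrace_mult Q_def Gmap_outer mult.commute)
    also have "\<dots> = 0"
      using null unfolding cross_null_def by simp
    finally show ?thesis .
  qed
  then have "cinner (perp W *v w) (FG \<gamma> (W ** E ** W) *v u) = 0" for w u
    by (simp add: cinner_FG_sandwich[OF orth_proj_hermitian[OF W]] Q_def)
  then show ?thesis
    by (simp add: vec_eq_iff matrix_mult_entry_left[OF perp_hermitian[OF W]])
qed

lemma FG_sandwich_mult_perp:
  assumes H: "hermitian \<gamma>" and W: "orth_proj W"
    and null: "\<And>x w. cross_null \<gamma> (W *v x) (perp W *v w)"
  shows "FG \<gamma> (W ** E ** W) ** perp W = 0"
proof -
  define Q where "Q b c = Gmap \<gamma> (outer (W *v axis b 1) (W *v axis c 1))" for b c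
  have "mtrace (Gmap \<gamma> (outer (perp W *v w) u) ** Q b c) = 0" for u w b c
  proof -
    have "mtrace (Gmap \<gamma> (outer (perp W *v w) u) ** Q b c) =
        (\<Sum>j\<in>UNIV. \<Sum>j'\<in>UNIV. cinner (tensor_axis u j) (\<gamma> *v tensor_axis (perp W *v w) j') *
           cinner (tensor_axis (W *v axis c 1) j') (\<gamma> *v tensor_axis (W *v axis b 1) j))"
      by (simp add: mtrace_mult Q_def Gmap_outer)
    also have "\<dots> = 0"
      using cross_null_swap[OF H null] by simp
    finally show ?thesis .
  qed
  then have "cinner u (FG \<gamma> (W ** E ** W) *v (perp W *v w)) = 0" for w u
    by (simp add: cinner_FG_sandwich[OF orth_proj_hermitian[OF W]] Q_def)
  then show ?thesis
    by (simp add: vec_eq_iff matrix_mult_entry_right)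
qed

lemma cross_null_imp_FG_invariant:
  assumes "hermitian \<gamma>" "orth_proj W" "\<And>x w. cross_null \<gamma> (W *v x) (perp W *v w)"
  shows "FG \<gamma> ` sandw W W \<subseteq> sandw W W"
proof
  fix Y
  assume "Y \<in> FG \<gamma> ` sandw W W"
  then obtain E where Y: "Y = FG \<gamma> (W ** E ** W)"
    by (auto simp: sandw_def)
  then have "W ** Y ** W = Y"
    using perp_mult_FG_sandwich[OF assms(2,3)] FG_sandwich_mult_perp[OF assms]
    by (simp add: perp_def matrix_diff_rdistrib matrix_diff_ldistrib)
  then show "Y \<in> sandw W W"
    unfolding sandw_def by (metis (mono_tags, lifting) mem_Collect_eq)
qed

lemma FG_invariant_transfer:
  assumes "psd \<gamma>" "psd A" "img \<gamma> = img A" "orth_proj W" "FG \<gamma> ` sandw W W \<subseteq> sandw W W"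
  shows "FG A ` sandw W W \<subseteq> sandw W W"
proof (rule cross_null_imp_FG_invariant[OF psd_hermitian[OF assms(2)] assms(4)])
  fix x w
  show "cross_null A (W *v x) (perp W *v w)"
    using FG_invariant_imp_cross_null[OF assms(1,4,5)]
    by (rule cross_null_transfer[OF psd_hermitian[OF assms(1)] psd_hermitian[OF assms(2)] assms(3)])
qed

lemma irreducible_on_FG_transfer:
  assumes "psd \<gamma>" "psd A" "img \<gamma> = img A" "irreducible_on (FG \<gamma>) V"
  shows "irreducible_on (FG A) V"
  using assms FG_invariant_transfer[OF assms(2,1) assms(3)[symmetric]]
  unfolding irreducible_on_def by blast

section \<open>Vanishing on \<open>V\<^sup>\<perp>\<M>\<^sub>k + \<M>\<^sub>kV\<^sup>\<perp>\<close> depends only on the kernel of \<open>\<gamma>\<close>\<close>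

abbreviation perp_span :: "'n::finite cmat \<Rightarrow> 'n cmat set" where
  "perp_span V \<equiv> {Y + Z | Y Z. Y \<in> lmul_sp (perp V) \<and> Z \<in> rmul_sp (perp V)}"

lemma tinner_self_eq_0:
  assumes "tinner Y Y = 0"
  shows "Y = (0::'n::finite cmat)"
proof -
  have "(\<Sum>(i, k)\<in>UNIV \<times> UNIV. Y$i$k * cnj (Y$i$k)) = 0"
    using assms by (simp add: tinner_eq_sum sum.cartesian_product)
  then have "Y$i$k = 0" for i k
    using sum_cnj_mult_self_eq_0[of "UNIV \<times> UNIV" "\<lambda>(i, k). Y$i$k" "(i, k)"]
    by (simp add: case_prod_unfold)
  then show ?thesis
    by (simp add: vec_eq_iff)
qed

lemma Gmap_eq_0_of_FG_eq_0:
  assumes "hermitian \<gamma>" "FG \<gamma> X = 0"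
  shows "Gmap \<gamma> X = 0"
proof -
  have "tinner (Gmap \<gamma> X) (Gmap \<gamma> X) = tinner (FG \<gamma> X) X"
    by (simp add: FG_def tinner_Fmap[OF assms(1)])
  also have "\<dots> = 0"
    using assms(2) by (simp add: tinner_eq_sum)
  finally show ?thesis
    by (rule tinner_self_eq_0)
qed

lemma tensor_axis_axis: "tensor_axis (axis a 1) j = axis (a, j) 1"
  by (auto simp: tensor_axis_def axis_def vec_eq_iff)

lemma Gmap_lmult_eq_0_imp_kernel:
  fixes \<gamma> :: "('k::finite \<times> 'm::finite) cmat" and P :: "'k cmat"
  assumes "\<And>E. Gmap \<gamma> (P ** E) = 0"
  shows "\<gamma> *v tensor_axis (P *v axis b 1) j = 0"
proof -
  have "(\<gamma> *v tensor_axis (P *v axis b 1) j) $ (a, j') = Gmap \<gamma> (P ** outer (axis b 1) (axis a 1)) $ j' $ j"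
    for a j'
    by (simp add: matrix_mult_outer_left Gmap_outer tensor_axis_axis cinner_axis_left)
  then show ?thesis
    using assms by (simp add: vec_eq_iff)
qed

lemma kernel_transfer:
  fixes \<gamma> A :: "'n::finite cmat"
  assumes "hermitian \<gamma>" "hermitian A" "img \<gamma> = img A" "\<gamma> *v v = 0"
  shows "A *v v = 0"
proof -
  obtain p where p: "A *v (A *v v) = \<gamma> *v p"
    using assms(3) unfolding img_def by (metis rangeE rangeI)
  have "cinner (A *v v) (A *v v) = cinner (A *v (A *v v)) v"
    by (simp add: cinner_hermitian[OF assms(2)])
  also have "\<dots> = cinner p (\<gamma> *v v)"
    by (simp add: p cinner_hermitian[OF assms(1)])
  also have "\<dots> = 0"
    using assms(4) by simp
  finally show ?thesis
    by (rule cinner_self_eq_0)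
qed

lemma Gmap_lmult_eq_0:
  fixes \<gamma> :: "('k::finite \<times> 'm::finite) cmat" and P :: "'k cmat"
  assumes "\<And>b j. \<gamma> *v tensor_axis (P *v axis b 1) j = 0"
  shows "Gmap \<gamma> (P ** E) = 0"
proof -
  have "Gmap \<gamma> (P ** E) $ j' $ j = 0" for j' j
  proof -
    have "Gmap \<gamma> (P ** E) $ j' $ j =
        (\<Sum>c\<in>UNIV. \<Sum>c'\<in>UNIV. \<Sum>b\<in>UNIV. E$b$c * (\<gamma>$(c, j')$(c', j) * P$c'$b))"
      by (simp add: Gmap_def matrix_matrix_mult_def sum_distrib_left mult_ac)
    also have "\<dots> = (\<Sum>c\<in>UNIV. \<Sum>b\<in>UNIV. \<Sum>c'\<in>UNIV. E$b$c * (\<gamma>$(c, j')$(c', j) * P$c'$b))"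
      by (rule sum.cong[OF refl], rule sum.swap)
    also have "\<dots> = (\<Sum>c\<in>UNIV. \<Sum>b\<in>UNIV. E$b$c * (\<gamma> *v tensor_axis (P *v axis b 1) j) $ (c, j'))"
      by (simp add: matrix_vector_mult_tensor_axis matrix_vector_mult_axis sum_distrib_left)
    also have "\<dots> = 0"
      using assms by simp
    finally show ?thesis .
  qed
  then show ?thesis
    by (simp add: vec_eq_iff)
qed

lemma Gmap_rmult_eq_0:
  fixes \<gamma> :: "('k::finite \<times> 'm::finite) cmat" and P :: "'k cmat"
  assumes "hermitian \<gamma>" "hermitian P" "\<And>b j. \<gamma> *v tensor_axis (P *v axis b 1) j = 0"
  shows "Gmap \<gamma> (E ** P) = 0"
proof -
  have "E ** P = cadj (P ** cadj E)"
    using assms(2) by (simp add: cadj_mult hermitian_def)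
  then show ?thesis
    by (simp add: Gmap_cadj[OF assms(1)] Gmap_lmult_eq_0[OF assms(3)])
qed

lemma Gmap_add: "Gmap \<gamma> (X + Y) = Gmap \<gamma> X + Gmap \<gamma> Y"
  by (simp add: Gmap_def vec_eq_iff distrib_left sum.distrib)

lemma Fmap_zero: "Fmap \<gamma> 0 = 0"
  by (simp add: Fmap_def vec_eq_iff)

lemma FG_perp_span_zero_transfer:
  assumes "psd \<gamma>" "psd A" "img \<gamma> = img A" "orth_proj V"
    and zero: "\<forall>X \<in> perp_span V. FG \<gamma> X = 0"
  shows "\<forall>X \<in> perp_span V. FG A X = 0"
proof
  have H: "hermitian \<gamma>" and HA: "hermitian A" and HP: "hermitian (perp V)"
    using assms by (simp_all add: psd_hermitian perp_hermitian)
  have "Gmap \<gamma> (perp V ** E) = 0" for E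
  proof (rule Gmap_eq_0_of_FG_eq_0[OF H])
    have "perp V ** E + 0 ** perp V \<in> perp_span V"
      unfolding lmul_sp_def rmul_sp_def by blast
    then show "FG \<gamma> (perp V ** E) = 0"
      using zero by simp
  qed
  then have "\<gamma> *v tensor_axis (perp V *v axis b 1) j = 0" for b j
    by (rule Gmap_lmult_eq_0_imp_kernel)
  then have kernel: "A *v tensor_axis (perp V *v axis b 1) j = 0" for b j
    using kernel_transfer[OF H HA assms(3)] by blast
  fix X
  assume "X \<in> perp_span V"
  then obtain E1 E2 where "X = perp V ** E1 + E2 ** perp V"
    unfolding lmul_sp_def rmul_sp_def by blast
  then have "Gmap A X = 0"
    by (simp add: Gmap_add Gmap_lmult_eq_0[OF kernel] Gmap_rmult_eq_0[OF HA HP kernel])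
  then show "FG A X = 0"
    by (simp add: FG_def Fmap_zero)
qed

section \<open>Complete reducibility with a single block\<close>

lemma tinner_outer: "tinner X (outer x y) = cinner x (X *v y)"
  by (simp add: tinner_eq_sum outer_def cinner_def matrix_vector_mult_def sum_distrib_left mult_ac)

lemma perp_span_of_orthogonal:
  assumes "orth_proj V" "\<forall>Y\<in>sandw V V. tinner X Y = 0"
  shows "X \<in> perp_span V"
proof -
  have cV: "cadj V = V"
    using assms(1) by (simp add: orth_proj_def)
  have "(V ** X ** V)$a$b = cinner (V *v axis a 1) ((X ** V) *v axis b 1)" for a b
    unfolding matrix_mul_assoc[symmetric]
    by (rule matrix_mult_entry_left[OF orth_proj_hermitian[OF assms(1)]])
  also have "\<dots> a b = tinner X (V ** outer (axis a 1) (axis b 1) ** V)" for a b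
    by (simp add: matrix_mult_outer_left matrix_mult_outer_right cV tinner_outer
        matrix_vector_mul_assoc)
  moreover have "V ** outer (axis a 1) (axis b 1) ** V \<in> sandw V V" for a b
    unfolding sandw_def by blast
  ultimately have "V ** X ** V = 0"
    using assms(2) by (simp add: vec_eq_iff)
  then have "X = perp V ** X + (V ** X) ** perp V"
    by (simp add: perp_def matrix_diff_rdistrib matrix_diff_ldistrib)
  then show ?thesis
    unfolding lmul_sp_def rmul_sp_def by blast
qed

lemma CR_single_block:
  assumes "psd \<gamma>" "orth_proj V" "FG \<gamma> ` sandw V V \<subseteq> sandw V V"
    "irreducible_on (FG \<gamma>) V" "\<forall>X \<in> perp_span V. FG \<gamma> X = 0"
  shows "\<gamma> \<in> CR"
proof -
  have vanishing: "FG \<gamma> X = 0" if "\<forall>Y\<in>sandw V V. tinner X Y = 0" for X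
    using perp_span_of_orthogonal[OF assms(2) that] assms(5) by blast
  have "completely_reducible (FG \<gamma>)"
    unfolding completely_reducible_def
  proof (intro conjI exI[of _ "[V]"])
    show "self_adjoint_map (FG \<gamma>)"
      by (rule FG_self_adjoint[OF psd_hermitian[OF assms(1)]])
    show "positive_map (FG \<gamma>)"
      by (rule FG_positive[OF assms(1)])
  qed (use assms vanishing in auto)
  then show ?thesis
    using assms(1) by (simp add: CR_def is_state_def)
qed

theorem mainTheorem9:
  fixes \<gamma> A :: "('k::finite \<times> 'm::finite) cmat" and V1 :: "'k cmat"
  assumes "is_state \<gamma>" and "is_state A" and "img \<gamma> = img A"
    and "orth_proj V1"
    and "FG \<gamma> ` sandw V1 V1 \<subseteq> sandw V1 V1"
    and "irreducible_on (FG \<gamma>) V1"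
    and "\<forall>X \<in> {Y + Z | Y Z. Y \<in> lmul_sp (perp V1) \<and> Z \<in> rmul_sp (perp V1)}. FG \<gamma> X = 0"
  shows "FG A ` sandw V1 V1 \<subseteq> sandw V1 V1
    \<and> irreducible_on (FG A) V1
    \<and> (\<forall>X \<in> {Y + Z | Y Z. Y \<in> lmul_sp (perp V1) \<and> Z \<in> rmul_sp (perp V1)}. FG A X = 0)
    \<and> \<gamma> \<in> CR \<and> A \<in> CR"
proof -
  have \<gamma>: "psd \<gamma>" and A: "psd A"
    using assms(1,2) by (simp_all add: is_state_def)
  have invariant: "FG A ` sandw V1 V1 \<subseteq> sandw V1 V1"
    by (rule FG_invariant_transfer[OF \<gamma> A assms(3-5)])
  have irreducible: "irreducible_on (FG A) V1"
    by (rule irreducible_on_FG_transfer[OF \<gamma> A assms(3,6)])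
  have vanishing: "\<forall>X \<in> perp_span V1. FG A X = 0"
    by (rule FG_perp_span_zero_transfer[OF \<gamma> A assms(3,4,7)])
  show ?thesis
    using invariant irreducible vanishing CR_single_block[OF \<gamma> assms(4-7)]
      CR_single_block[OF A assms(4) invariant irreducible vanishing]
    by blast
qed

end
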